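(* Let $G\in\mathcal{G}_3$ and let $e=(a,b)$ be an interior edge of $G$ of odd degree. Let $G'$ be obtained from $G$ by an edge cut at $e$. Then for every interior edge $f$ of $G$ which is an edge of the cycle $S(a)\cap S(b)$, the degree of $f$ in $G'$ equals its degree in $G$ plus one.
   Context: All graphs are finite simple graphs. For a vertex $x$, $S(x)$ is the subgraph induced by the neighbors of $x$. A graph is contractible if it is $K_1$, or, inductively, if there is a vertex $x$ with both $S(x)$ and the subgraph induced by $V\setminus\{x\}$ contractible. $\mathcal{G}_0$: graphs without edges; $\mathcal{S}_0$: those with two vertices; $\mathcal{B}_0$: those with one vertex. For $d\ge1$: $\mathcal{G}_d$ is the class of graphs in which every $S(x)$ lies in $\mathcal{S}_{d-1}\cup\mathcal{B}_{d-1}$; the boundary is the subgraph induced by vertices with $S(x)\in\mathcal{B}_{d-1}$, and the interior must be nonempty; $\mathcal{B}_d$: contractible graphs in $\mathcal{G}_d$ with boundary in $\mathcal{S}_{d-1}$; $\mathcal{S}_d$: non-contractible graphs in $\mathcal{G}_d$ such that removing any single vertex yields a graph in $\mathcal{B}_d$. For $G\in\mathcal{G}_3$ and an edge $e=(a,b)$, the degree of $e$ is the number of vertices of $S(a)\cap S(b)$; $e$ is interior if $S(a)\cap S(b)$ is a cycle graph. The edge cut at $e=(a,b)$ produces $G'$ by adding a new vertex $v$, deleting the edge $(a,b)$, and adding the edges $(a,v)$, $(b,v)$ and $(v,x_i)$ for every vertex $x_i$ of $S(a)\cap S(b)$. *)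

theory Defs
  imports Main
begin

text \<open>A finite simple graph: a vertex set and a symmetric irreflexive edge relation
  (edges stored as ordered pairs in both directions).\<close>
type_synonym 'a graph = "'a set \<times> ('a \<times> 'a) set"

definition verts :: "'a graph \<Rightarrow> 'a set" where "verts G = fst G"
definition edges :: "'a graph \<Rightarrow> ('a \<times> 'a) set" where "edges G = snd G"

definition wf_graph :: "'a graph \<Rightarrow> bool" where
  "wf_graph G \<longleftrightarrow> finite (verts G) \<and> edges G \<subseteq> verts G \<times> verts G
     \<and> sym (edges G) \<and> irrefl (edges G)"

definition induced :: "'a graph \<Rightarrow> 'a set \<Rightarrow> 'a graph" where
  "induced G W = (W \<inter> verts G, edges G \<inter> ((W \<inter> verts G) \<times> (W \<inter> verts G)))"

definition nbrs :: "'a graph \<Rightarrow> 'a \<Rightarrow> 'a set" where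
  "nbrs G x = {y \<in> verts G. (x, y) \<in> edges G}"

definition sphere :: "'a graph \<Rightarrow> 'a \<Rightarrow> 'a graph" where
  "sphere G x = induced G (nbrs G x)"

inductive contractible :: "'a graph \<Rightarrow> bool" where
  K1: "wf_graph G \<Longrightarrow> verts G = {v} \<Longrightarrow> contractible G"
| step: "wf_graph G \<Longrightarrow> x \<in> verts G \<Longrightarrow> contractible (sphere G x)
     \<Longrightarrow> contractible (induced G (verts G - {x})) \<Longrightarrow> contractible G"

text \<open>Given the classes S_{d-1} (predicate S) and B_{d-1} (predicate B), the classes
  G_d, B_d, S_d.\<close>
definition Gnext :: "('a graph \<Rightarrow> bool) \<Rightarrow> ('a graph \<Rightarrow> bool) \<Rightarrow> 'a graph \<Rightarrow> bool" where
  "Gnext S B G \<longleftrightarrow> wf_graph G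
     \<and> (\<forall>x \<in> verts G. S (sphere G x) \<or> B (sphere G x))
     \<and> (\<exists>x \<in> verts G. S (sphere G x))"

definition boundary :: "('a graph \<Rightarrow> bool) \<Rightarrow> 'a graph \<Rightarrow> 'a graph" where
  "boundary B G = induced G {x \<in> verts G. B (sphere G x)}"

definition Bnext :: "('a graph \<Rightarrow> bool) \<Rightarrow> ('a graph \<Rightarrow> bool) \<Rightarrow> 'a graph \<Rightarrow> bool" where
  "Bnext S B G \<longleftrightarrow> Gnext S B G \<and> contractible G \<and> S (boundary B G)"

definition Snext :: "('a graph \<Rightarrow> bool) \<Rightarrow> ('a graph \<Rightarrow> bool) \<Rightarrow> 'a graph \<Rightarrow> bool" where
  "Snext S B G \<longleftrightarrow> Gnext S B G \<and> \<not> contractible G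
     \<and> (\<forall>x \<in> verts G. Bnext S B (induced G (verts G - {x})))"

definition G0 :: "'a graph \<Rightarrow> bool" where
  "G0 G \<longleftrightarrow> wf_graph G \<and> edges G = {}"

primrec SB :: "nat \<Rightarrow> ('a graph \<Rightarrow> bool) \<times> ('a graph \<Rightarrow> bool)" where
  "SB 0 = ((\<lambda>G. G0 G \<and> card (verts G) = 2), (\<lambda>G. G0 G \<and> card (verts G) = 1))"
| "SB (Suc d) = (Snext (fst (SB d)) (snd (SB d)), Bnext (fst (SB d)) (snd (SB d)))"

definition Sclass :: "nat \<Rightarrow> 'a graph \<Rightarrow> bool" where "Sclass d = fst (SB d)"
definition Bclass :: "nat \<Rightarrow> 'a graph \<Rightarrow> bool" where "Bclass d = snd (SB d)"

fun Gclass :: "nat \<Rightarrow> 'a graph \<Rightarrow> bool" where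
  "Gclass 0 = G0"
| "Gclass (Suc d) = Gnext (Sclass d) (Bclass d)"

definition cycle_graph :: "'a graph \<Rightarrow> bool" where
  "cycle_graph C \<longleftrightarrow> wf_graph C \<and> card (verts C) \<ge> 3
     \<and> (\<forall>v \<in> verts C. card (nbrs C v) = 2)
     \<and> (\<forall>u \<in> verts C. \<forall>v \<in> verts C. (u, v) \<in> (edges C)\<^sup>*)"

text \<open>S(a) \<inter> S(b) for an edge (a,b): the subgraph induced by the common neighbours.\<close>
definition edge_link :: "'a graph \<Rightarrow> 'a \<Rightarrow> 'a \<Rightarrow> 'a graph" where
  "edge_link G a b = induced G (nbrs G a \<inter> nbrs G b)"

definition edge_degree :: "'a graph \<Rightarrow> 'a \<Rightarrow> 'a \<Rightarrow> nat" where
  "edge_degree G a b = card (verts (edge_link G a b))"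

definition interior_edge :: "'a graph \<Rightarrow> 'a \<Rightarrow> 'a \<Rightarrow> bool" where
  "interior_edge G a b \<longleftrightarrow> (a, b) \<in> edges G \<and> cycle_graph (edge_link G a b)"

definition edge_cut :: "'a graph \<Rightarrow> 'a \<Rightarrow> 'a \<Rightarrow> 'a \<Rightarrow> 'a graph" where
  "edge_cut G a b v =
     (insert v (verts G),
      (edges G - {(a, b), (b, a)})
      \<union> {(a, v), (v, a), (b, v), (v, b)}
      \<union> {(v, x) | x. x \<in> verts (edge_link G a b)}
      \<union> {(x, v) | x. x \<in> verts (edge_link G a b)})"

end

theory Submission
  imports Defs
begin

text \<open>The new vertex v is joined exactly to a, b and the common neighbours of a and b, and the
  only deleted edge is (a,b). Hence a common neighbour c of a and b keeps all its neighbours and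
  gains v, so for two such vertices c, d the common neighbourhood of c and d grows by exactly v.\<close>

lemma wf_graph_if_Gclass_Suc: "Gclass (Suc n) G \<Longrightarrow> wf_graph G"
  by (simp add: Gnext_def)

lemma verts_edge_cut: "verts (edge_cut G a b v) = insert v (verts G)"
  by (simp add: edge_cut_def verts_def)

lemma verts_edge_link: "verts (edge_link G a b) = nbrs G a \<inter> nbrs G b"
  by (auto simp: edge_link_def induced_def verts_def nbrs_def)

lemma nbrs_edge_cut_common_nbr:
  assumes wf: "wf_graph G" and v: "v \<notin> verts G"
    and c: "c \<in> verts (edge_link G a b)"
  shows "nbrs (edge_cut G a b v) c = insert v (nbrs G c)"
proof -
  have E: "edges G \<subseteq> verts G \<times> verts G" and irr: "irrefl (edges G)"
    using wf by (auto simp: wf_graph_def)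
  have ac: "(a, c) \<in> edges G" and bc: "(b, c) \<in> edges G"
    using c by (auto simp: verts_edge_link nbrs_def)
  then have "c \<noteq> a" "c \<noteq> b" "c \<noteq> v"
    using irr E v by (auto simp: irrefl_def)
  then show ?thesis
    using E v c by (auto simp: nbrs_def edge_cut_def verts_def edges_def)
qed

lemma edge_degree_edge_cut_common_nbrs:
  assumes wf: "wf_graph G" and v: "v \<notin> verts G"
    and c: "c \<in> verts (edge_link G a b)" and d: "d \<in> verts (edge_link G a b)"
  shows "edge_degree (edge_cut G a b v) c d = edge_degree G c d + 1"
proof -
  have "verts (edge_link (edge_cut G a b v) c d) = insert v (verts (edge_link G c d))"
    using nbrs_edge_cut_common_nbr[OF wf v c] nbrs_edge_cut_common_nbr[OF wf v d]
    by (simp add: verts_edge_link)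
  moreover have "finite (verts (edge_link G c d))"
    using wf by (auto simp: wf_graph_def verts_edge_link nbrs_def)
  moreover have "v \<notin> verts (edge_link G c d)"
    using v by (auto simp: verts_edge_link nbrs_def)
  ultimately show ?thesis
    by (simp add: edge_degree_def)
qed

theorem mainTheorem12:
  fixes G :: "'a graph" and a b v :: 'a
  assumes "Gclass 3 G"
    and "interior_edge G a b"
    and "odd (edge_degree G a b)"
    and "v \<notin> verts G"
  shows "\<forall>c d. interior_edge G c d \<and> (c, d) \<in> edges (edge_link G a b)
           \<longrightarrow> edge_degree (edge_cut G a b v) c d = edge_degree G c d + 1"
proof (intro allI impI)
  fix c d
  assume "interior_edge G c d \<and> (c, d) \<in> edges (edge_link G a b)"
  then have "c \<in> verts (edge_link G a b)" "d \<in> verts (edge_link G a b)"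
    by (auto simp: edge_link_def induced_def verts_def edges_def)
  moreover have "wf_graph G"
    using assms(1) wf_graph_if_Gclass_Suc[of 2] by (simp add: numeral_eq_Suc)
  ultimately show "edge_degree (edge_cut G a b v) c d = edge_degree G c d + 1"
    using edge_degree_edge_cut_common_nbrs[OF _ assms(4)] by blast
qed

end
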